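(* Let $\Gamma\neq\mathbb N$ be a numerical semigroup that is a complete intersection. Then $\mathrm e(\Gamma)\le \log_2(\mathrm c(\Gamma))+1$.
   Context: A numerical semigroup $\Gamma$ is a submonoid of $(\mathbb N,+)$ with finite complement in $\mathbb N$. It has a unique minimal generating system $\{r_0,\ldots,r_h\}$, whose cardinality is the embedding dimension $\mathrm e(\Gamma)$. The Frobenius number $\mathrm F(\Gamma)$ is the largest integer not in $\Gamma$, and the conductor is $\mathrm c(\Gamma)=\mathrm F(\Gamma)+1$. Let $\varphi:\mathbb N^{h+1}\to\Gamma$, $\varphi(a)=\sum a_ir_i$; a presentation of $\Gamma$ is a generating set of the congruence $\ker\varphi=\{(a,b):\varphi(a)=\varphi(b)\}$, and a minimal presentation is an inclusion-minimal one (its cardinality is always at least $\mathrm e(\Gamma)-1$). $\Gamma$ is a complete intersection if a minimal presentation has cardinality $\mathrm e(\Gamma)-1$. *)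

theory Defs
  imports Complex_Main
begin

definition numerical_semigroup :: "nat set \<Rightarrow> bool" where
  "numerical_semigroup S \<longleftrightarrow> 0 \<in> S \<and> (\<forall>x\<in>S. \<forall>y\<in>S. x + y \<in> S) \<and> finite (UNIV - S)"

definition monoid_gen :: "nat set \<Rightarrow> nat set" where
  "monoid_gen A = {x. \<exists>B f. finite B \<and> B \<subseteq> A \<and> x = (\<Sum>r\<in>B. f r * r)}"

definition is_min_gen_sys :: "nat set \<Rightarrow> nat set \<Rightarrow> bool" where
  "is_min_gen_sys S A \<longleftrightarrow> monoid_gen A = S \<and> (\<forall>B. B \<subset> A \<longrightarrow> monoid_gen B \<noteq> S)"

definition frobenius :: "nat set \<Rightarrow> nat" where
  "frobenius S = Max (UNIV - S)"

definition conductor :: "nat set \<Rightarrow> nat" where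
  "conductor S = frobenius S + 1"

text \<open>N^A: the generators r in A are used as indices; a factorization is a function vanishing off A.\<close>
definition factorizations :: "nat set \<Rightarrow> (nat \<Rightarrow> nat) set" where
  "factorizations A = {a. \<forall>r. r \<notin> A \<longrightarrow> a r = 0}"

definition factor_eval :: "nat set \<Rightarrow> (nat \<Rightarrow> nat) \<Rightarrow> nat" where
  "factor_eval A a = (\<Sum>r\<in>A. a r * r)"

definition kernel_congruence :: "nat set \<Rightarrow> ((nat \<Rightarrow> nat) \<times> (nat \<Rightarrow> nat)) set" where
  "kernel_congruence A = {(a, b). a \<in> factorizations A \<and> b \<in> factorizations A \<and>
      factor_eval A a = factor_eval A b}"

inductive_set cong_gen :: "nat set \<Rightarrow> ((nat \<Rightarrow> nat) \<times> (nat \<Rightarrow> nat)) set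
    \<Rightarrow> ((nat \<Rightarrow> nat) \<times> (nat \<Rightarrow> nat)) set"
  for A :: "nat set" and \<rho> :: "((nat \<Rightarrow> nat) \<times> (nat \<Rightarrow> nat)) set" where
  base: "(a, b) \<in> \<rho> \<Longrightarrow> (a, b) \<in> cong_gen A \<rho>"
| refl: "a \<in> factorizations A \<Longrightarrow> (a, a) \<in> cong_gen A \<rho>"
| sym: "(a, b) \<in> cong_gen A \<rho> \<Longrightarrow> (b, a) \<in> cong_gen A \<rho>"
| trans: "(a, b) \<in> cong_gen A \<rho> \<Longrightarrow> (b, c) \<in> cong_gen A \<rho> \<Longrightarrow> (a, c) \<in> cong_gen A \<rho>"
| transl: "(a, b) \<in> cong_gen A \<rho> \<Longrightarrow> c \<in> factorizations A \<Longrightarrow>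
     ((\<lambda>r. a r + c r), (\<lambda>r. b r + c r)) \<in> cong_gen A \<rho>"

definition is_presentation :: "nat set \<Rightarrow> ((nat \<Rightarrow> nat) \<times> (nat \<Rightarrow> nat)) set \<Rightarrow> bool" where
  "is_presentation A \<rho> \<longleftrightarrow> \<rho> \<subseteq> kernel_congruence A \<and> cong_gen A \<rho> = kernel_congruence A"

definition is_minimal_presentation :: "nat set \<Rightarrow> ((nat \<Rightarrow> nat) \<times> (nat \<Rightarrow> nat)) set \<Rightarrow> bool" where
  "is_minimal_presentation A \<rho> \<longleftrightarrow> is_presentation A \<rho> \<and> (\<forall>\<sigma>. \<sigma> \<subset> \<rho> \<longrightarrow> \<not> is_presentation A \<sigma>)"

definition complete_intersection :: "nat set \<Rightarrow> nat set \<Rightarrow> bool" where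
  "complete_intersection S A \<longleftrightarrow> is_min_gen_sys S A \<and>
     (\<exists>\<rho>. finite \<rho> \<and> is_minimal_presentation A \<rho> \<and> card \<rho> = card A - 1)"

end

theory Submission
  imports Defs "HOL-Library.Function_Algebras"
begin

text \<open>The integer syzygies of \<open>A\<close> form a lattice of rank \<open>card A - 1\<close>
  generated by the vectors \<open>a - b\<close> of the relations \<open>(a, b)\<close>, so these vectors are linearly
  independent.

  Starting from the partition of \<open>A\<close> into singletons, blocks are merged one at a time: a relation
  \<open>(a, b)\<close> with \<open>a\<close> supported in a block \<open>X\<close> and \<open>b\<close> in another block \<open>Y\<close> joins them, and
  every block \<open>B\<close> carries \<open>card B - 1\<close> relations supported in \<open>B\<close>. By independence, the relations
  of the merged block generate its syzygies, and comparing integer coefficients shows that the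
  common value \<open>n\<close> of \<open>a\<close> and \<open>b\<close> divides \<open>lcm (Gcd X) (Gcd Y)\<close>. As the generators are
  irreducible, \<open>n\<close> is a sum of at least two generators of \<open>X\<close>, so \<open>2 x \<le> n\<close> for some \<open>x \<in> X\<close>,
  and likewise for \<open>Y\<close>. Together these propagate the bound \<open>Gcd B * 2 ^ (card B - 1) \<le> x\<close> for
  all \<open>x \<in> B\<close> to the merged block. For \<open>B = A\<close> it bounds the multiplicity by \<open>2 ^ (card A - 1)\<close>
  from below, and the multiplicity is at most the conductor.\<close>

section \<open>Generated submonoids and supports\<close>

lemma monoid_gen_sum: "finite B \<Longrightarrow> B \<subseteq> A \<Longrightarrow> (\<Sum>r\<in>B. f r * r) \<in> monoid_gen A"
  unfolding monoid_gen_def by blast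

lemma monoid_gen_zero: "0 \<in> monoid_gen A"
  using monoid_gen_sum[of "{}" A] by simp

lemma monoid_gen_generator: "a \<in> A \<Longrightarrow> a \<in> monoid_gen A"
  using monoid_gen_sum[of "{a}" A "\<lambda>_. 1"] by simp

lemma monoid_gen_mono: "A \<subseteq> A' \<Longrightarrow> monoid_gen A \<subseteq> monoid_gen A'"
  unfolding monoid_gen_def by blast

lemma monoid_gen_add:
  assumes "x \<in> monoid_gen A" "y \<in> monoid_gen A"
  shows "x + y \<in> monoid_gen A"
proof -
  obtain B1 f1 where B1: "finite B1" "B1 \<subseteq> A" "x = (\<Sum>r\<in>B1. f1 r * r)"
    using assms(1) unfolding monoid_gen_def by blast
  obtain B2 f2 where B2: "finite B2" "B2 \<subseteq> A" "y = (\<Sum>r\<in>B2. f2 r * r)"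
    using assms(2) unfolding monoid_gen_def by blast
  define f where "f r = (if r \<in> B1 then f1 r else 0) + (if r \<in> B2 then f2 r else 0)" for r
  have fin: "finite (B1 \<union> B2)" using B1 B2 by auto
  have "(\<Sum>r\<in>B1 \<union> B2. f r * r) = (\<Sum>r\<in>B1 \<union> B2. (if r \<in> B1 then f1 r * r else 0))
      + (\<Sum>r\<in>B1 \<union> B2. (if r \<in> B2 then f2 r * r else 0))"
    unfolding f_def by (auto simp: sum.distrib[symmetric] distrib_right intro!: sum.cong)
  also have "\<dots> = x + y"
    using fin B1 B2 by (simp add: sum.inter_restrict[symmetric] Int_absorb1 Int_absorb2)
  finally show ?thesis using monoid_gen_sum[OF fin, of A f] B1 B2 by auto
qed

lemma monoid_gen_least:
  assumes zero: "0 \<in> M" and add: "\<And>x y. x \<in> M \<Longrightarrow> y \<in> M \<Longrightarrow> x + y \<in> M" and "A \<subseteq> M"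
  shows "monoid_gen A \<subseteq> M"
proof
  fix x assume "x \<in> monoid_gen A"
  then obtain B f where B: "finite B" "B \<subseteq> A" and x: "x = (\<Sum>r\<in>B. f r * r)"
    unfolding monoid_gen_def by blast
  have mult: "k * r \<in> M" if "r \<in> M" for k r
    using that by (induction k) (auto intro: zero add)
  show "x \<in> M" unfolding x using B
    by (induction B rule: finite_induct) (use assms in \<open>auto intro: zero add mult\<close>)
qed

lemma min_gen_sys_irreducible:
  assumes "is_min_gen_sys S A" "a \<in> A"
  shows "a \<notin> monoid_gen (A - {a})"
proof
  assume "a \<in> monoid_gen (A - {a})"
  then have "A \<subseteq> monoid_gen (A - {a})"
    using monoid_gen_generator[of _ "A - {a}"] by blast
  then have "monoid_gen A \<subseteq> monoid_gen (A - {a})"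
    by (intro monoid_gen_least monoid_gen_zero monoid_gen_add)
  with monoid_gen_mono[of "A - {a}" A] have "monoid_gen (A - {a}) = S"
    using assms(1) by (auto simp: is_min_gen_sys_def)
  moreover have "A - {a} \<subset> A" using assms(2) by auto
  ultimately show False using assms(1) unfolding is_min_gen_sys_def by blast
qed

lemma min_gen_sys_zero_notin: "is_min_gen_sys S A \<Longrightarrow> 0 \<notin> A"
  using min_gen_sys_irreducible monoid_gen_zero by blast

lemma monoid_gen_Min_le:
  assumes "x \<in> monoid_gen A" "0 < x" "finite A"
  shows "Min A \<le> x"
proof -
  obtain B f where B: "finite B" "B \<subseteq> A" "x = (\<Sum>r\<in>B. f r * r)"
    using assms(1) unfolding monoid_gen_def by blast
  obtain r where r: "r \<in> B" "f r * r \<noteq> 0"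
    using B(3) assms(2) by (metis (no_types, lifting) less_irrefl sum.neutral)
  have "Min A \<le> r" using r B assms(3) by auto
  also have "r \<le> f r * r" using r by simp
  also have "f r * r \<le> x" unfolding B(3) using B(1) r(1) by (intro member_le_sum) auto
  finally show ?thesis .
qed

definition supported_on :: "(nat \<Rightarrow> nat) \<Rightarrow> nat set \<Rightarrow> bool" where
  "supported_on x B \<longleftrightarrow> (\<forall>k. k \<notin> B \<longrightarrow> x k = 0)"

lemma supported_on_add_iff:
  "supported_on (\<lambda>r. a r + c r) B \<longleftrightarrow> supported_on a B \<and> supported_on c B"
  unfolding supported_on_def by auto

lemma supported_on_mono: "supported_on x B \<Longrightarrow> B \<subseteq> C \<Longrightarrow> supported_on x C"
  unfolding supported_on_def by auto

lemma supported_on_nonzero_member: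
  "supported_on x B \<Longrightarrow> x k \<noteq> 0 \<Longrightarrow> k \<in> B"
  unfolding supported_on_def by auto

lemma supported_on_disjoint_eq_0:
  "supported_on x B \<Longrightarrow> supported_on x C \<Longrightarrow> B \<inter> C = {} \<Longrightarrow> x = 0"
  unfolding supported_on_def by (auto simp: fun_eq_iff)

lemma factor_eval_supported:
  assumes "finite A" "B \<subseteq> A" "supported_on x B"
  shows "factor_eval A x = (\<Sum>r\<in>B. x r * r)"
  unfolding factor_eval_def using assms
  by (intro sum.mono_neutral_right) (auto simp: supported_on_def)

section \<open>Chains of elementary relations\<close>

definition cong_step :: "nat set \<Rightarrow> ((nat \<Rightarrow> nat) \<times> (nat \<Rightarrow> nat)) set
    \<Rightarrow> (nat \<Rightarrow> nat) \<Rightarrow> (nat \<Rightarrow> nat) \<Rightarrow> bool" where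
  "cong_step A \<rho> x y \<longleftrightarrow> (\<exists>a b c. ((a, b) \<in> \<rho> \<or> (b, a) \<in> \<rho>) \<and> c \<in> factorizations A \<and>
      x = (\<lambda>r. a r + c r) \<and> y = (\<lambda>r. b r + c r))"

lemma cong_step_sym: "cong_step A \<rho> x y \<Longrightarrow> cong_step A \<rho> y x"
  unfolding cong_step_def by blast

lemma cong_step_translate:
  assumes "cong_step A \<rho> x y" "c \<in> factorizations A"
  shows "cong_step A \<rho> (\<lambda>r. x r + c r) (\<lambda>r. y r + c r)"
proof -
  obtain a b c' where "(a, b) \<in> \<rho> \<or> (b, a) \<in> \<rho>" "c' \<in> factorizations A"
    "x = (\<lambda>r. a r + c' r)" "y = (\<lambda>r. b r + c' r)"
    using assms(1) unfolding cong_step_def by blast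
  then show ?thesis
    unfolding cong_step_def using assms(2)
    by (intro exI[of _ a] exI[of _ b] exI[of _ "\<lambda>r. c' r + c r"])
       (auto simp: factorizations_def add.assoc)
qed

lemma cong_gen_imp_cong_steps: "(x, y) \<in> cong_gen A \<rho> \<Longrightarrow> (cong_step A \<rho>)\<^sup>*\<^sup>* x y"
proof (induction rule: cong_gen.induct)
  case (base a b)
  then have "cong_step A \<rho> a b"
    unfolding cong_step_def
    by (intro exI[of _ a] exI[of _ b] exI[of _ "\<lambda>r. 0"]) (auto simp: factorizations_def)
  then show ?case by auto
next
  case (sym a b)
  from sym.IH show ?case
    by (induction rule: rtranclp_induct) (auto intro: converse_rtranclp_into_rtranclp cong_step_sym)
next
  case (transl a b c)
  from transl.IH show ?case
    by (induction rule: rtranclp_induct)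
       (auto intro: rtranclp.rtrancl_into_rtrancl cong_step_translate transl.hyps(2))
qed auto

lemma rtranclp_crossing: "R\<^sup>*\<^sup>* x y \<Longrightarrow> P x \<Longrightarrow> \<not> P y \<Longrightarrow> \<exists>z z'. P z \<and> \<not> P z' \<and> R z z'"
  by (induction rule: rtranclp_induct) auto

text \<open>The relation lies on a chain of elementary steps from \<open>k0 \<cdot> e_l0\<close> to \<open>l0 \<cdot> e_k0\<close>, which
  starts inside and ends outside the factorizations supported on \<open>B\<close>.\<close>
lemma presentation_leaving_relation:
  assumes fin: "finite A" and pos: "0 \<notin> A" and pres: "is_presentation A \<rho>"
    and B: "B \<subseteq> A" "l0 \<in> B" "k0 \<in> A" "k0 \<notin> B"
  obtains a b where "(a, b) \<in> \<rho> \<or> (b, a) \<in> \<rho>" "supported_on a B" "\<not> supported_on b B" "a \<noteq> 0"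
proof -
  define x0 where "x0 = (\<lambda>r. if r = l0 then k0 else 0)"
  define y0 where "y0 = (\<lambda>r. if r = k0 then l0 else 0)"
  have "factor_eval A x0 = k0 * l0" "factor_eval A y0 = l0 * k0"
    unfolding factor_eval_def x0_def y0_def using B fin
    by (auto simp: if_distrib[of "\<lambda>x. x * _"] sum.delta' cong: if_cong)
  then have "(x0, y0) \<in> kernel_congruence A"
    using B by (auto simp: kernel_congruence_def factorizations_def x0_def y0_def)
  then have "(cong_step A \<rho>)\<^sup>*\<^sup>* x0 y0"
    using pres by (auto simp: is_presentation_def intro: cong_gen_imp_cong_steps)
  moreover have "supported_on x0 B" using B by (auto simp: supported_on_def x0_def)
  moreover have "\<not> supported_on y0 B"
    using B pos by (auto simp: supported_on_def y0_def intro!: exI[of _ k0] gr0I)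
  ultimately obtain z z' where "supported_on z B" "\<not> supported_on z' B" "cong_step A \<rho> z z'"
    using rtranclp_crossing[of _ x0 y0 "\<lambda>z. supported_on z B"] by blast
  then obtain a b where ab: "(a, b) \<in> \<rho> \<or> (b, a) \<in> \<rho>" and sa: "supported_on a B"
    and sb: "\<not> supported_on b B"
    unfolding cong_step_def by (metis supported_on_add_iff)
  have "a \<noteq> 0"
  proof
    assume "a = 0"
    have "(a, b) \<in> kernel_congruence A"
      using ab pres by (auto simp: is_presentation_def kernel_congruence_def)
    with \<open>a = 0\<close> have "\<forall>r\<in>A. b r * r = 0" and "b \<in> factorizations A"
      using fin by (auto simp: kernel_congruence_def factor_eval_def)
    then have "supported_on b B" using pos by (auto simp: supported_on_def factorizations_def)
    with sb show False ..
  qed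
  with ab sa sb show ?thesis using that by blast
qed

section \<open>Syzygies\<close>

interpretation lin: vector_space "\<lambda>c (f::nat \<Rightarrow> real) x. c * f x"
  by unfold_locales (auto simp: algebra_simps fun_eq_iff)

lemma sum_fun_apply: "(sum F S) x = (\<Sum>i\<in>S. F i x)"
  by (induction S rule: infinite_finite_induct) auto

definition syzygies :: "nat set \<Rightarrow> (nat \<Rightarrow> real) set" where
  "syzygies C = {u. (\<forall>j. j \<notin> C \<longrightarrow> u j = 0) \<and> (\<Sum>j\<in>C. u j * real j) = 0}"

definition elem_syzygy :: "nat \<Rightarrow> nat \<Rightarrow> nat \<Rightarrow> real" where
  "elem_syzygy k0 k = (\<lambda>j. (if j = k then real k0 else 0) - (if j = k0 then real k else 0))"

lemma elem_syzygy_in_syzygies: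
  assumes "finite C" "k0 \<in> C" "k \<in> C"
  shows "elem_syzygy k0 k \<in> syzygies C"
  using assms
  by (auto simp: syzygies_def elem_syzygy_def left_diff_distrib sum_subtractf
      if_distrib[of "\<lambda>x. x * _"] sum.delta cong: if_cong)

lemma syzygies_subset_span_elem_syzygies:
  assumes fin: "finite C" and k0: "k0 \<in> C" "0 < k0"
  shows "syzygies C \<subseteq> lin.span (elem_syzygy k0 ` (C - {k0}))"
proof
  fix u assume "u \<in> syzygies C"
  then have u0: "\<And>j. j \<notin> C \<Longrightarrow> u j = 0" and us: "(\<Sum>j\<in>C. u j * real j) = 0"
    by (auto simp: syzygies_def)
  define w where "w = (\<Sum>k\<in>C - {k0}. (\<lambda>x. (u k / real k0) * elem_syzygy k0 k x))"
  have "w \<in> lin.span (elem_syzygy k0 ` (C - {k0}))"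
    unfolding w_def by (intro lin.span_sum lin.span_scale lin.span_base) auto
  moreover have "w j = u j" for j
  proof (cases "j = k0")
    case True
    have "w j = - (\<Sum>k\<in>C - {k0}. u k * real k) / real k0"
      using True unfolding w_def sum_fun_apply
      by (simp add: elem_syzygy_def sum_divide_distrib sum_negf)
    also have "(\<Sum>k\<in>C - {k0}. u k * real k) = - (u k0 * real k0)"
      using us fin k0 by (simp add: sum.remove)
    finally show ?thesis using True k0 by simp
  next
    case False
    have "w j = (\<Sum>k\<in>C - {k0}. (if k = j then u k else 0))"
      unfolding w_def sum_fun_apply using False k0 by (intro sum.cong) (auto simp: elem_syzygy_def)
    also have "\<dots> = u j" using fin u0 False by (simp add: sum.delta)
    finally show ?thesis .
  qed
  ultimately show "u \<in> lin.span (elem_syzygy k0 ` (C - {k0}))"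
    by (metis ext)
qed

lemma inj_on_elem_syzygy: "0 < k0 \<Longrightarrow> inj_on (elem_syzygy k0) (- {k0})"
proof
  fix k k' assume "0 < k0" "k \<in> - {k0}" "k' \<in> - {k0}" "elem_syzygy k0 k = elem_syzygy k0 k'"
  then show "k = k'" by (auto simp: elem_syzygy_def fun_eq_iff split: if_splits)
qed

lemma independent_elem_syzygies:
  assumes "0 < k0"
  shows "lin.independent (elem_syzygy k0 ` (C - {k0}))"
  unfolding lin.independent_explicit_module
proof (intro allI impI)
  fix t u v
  assume t: "finite t" "t \<subseteq> elem_syzygy k0 ` (C - {k0})"
    and comb: "(\<Sum>v\<in>t. (\<lambda>x. u v * v x)) = 0" and "v \<in> t"
  then obtain j where j: "j \<noteq> k0" "v = elem_syzygy k0 j" by auto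
  have coord: "w j = (if w = v then real k0 else 0)" if w: "w \<in> t" for w
  proof -
    obtain k where k: "k \<noteq> k0" "w = elem_syzygy k0 k" using w t(2) by blast
    have "w = v \<longleftrightarrow> k = j"
      using inj_on_elem_syzygy[OF assms] k j by (auto dest: inj_onD)
    then show ?thesis using k j by (auto simp: elem_syzygy_def)
  qed
  have "0 = (\<Sum>w\<in>t. u w * w j)" using fun_cong[OF comb, of j] by (simp add: sum_fun_apply)
  also have "\<dots> = (\<Sum>w\<in>t. if w = v then u v * real k0 else 0)"
    by (intro sum.cong) (auto simp: coord)
  also have "\<dots> = u v * real k0" using t(1) \<open>v \<in> t\<close> by simp
  finally show "u v = 0" using assms by simp
qed

lemma elem_syzygies_basis:
  assumes fin: "finite C" and k0: "k0 \<in> C" "0 < k0"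
  shows "elem_syzygy k0 ` (C - {k0}) \<subseteq> syzygies C"
    and "syzygies C \<subseteq> lin.span (elem_syzygy k0 ` (C - {k0}))"
    and "lin.independent (elem_syzygy k0 ` (C - {k0}))"
    and "card (elem_syzygy k0 ` (C - {k0})) = card C - 1"
proof -
  show "elem_syzygy k0 ` (C - {k0}) \<subseteq> syzygies C"
    using elem_syzygy_in_syzygies[OF fin k0(1)] by auto
  show "syzygies C \<subseteq> lin.span (elem_syzygy k0 ` (C - {k0}))"
    using syzygies_subset_span_elem_syzygies[OF fin k0] .
  show "lin.independent (elem_syzygy k0 ` (C - {k0}))"
    using independent_elem_syzygies[OF k0(2)] .
  have "inj_on (elem_syzygy k0) (C - {k0})"
    using inj_on_elem_syzygy[OF k0(2)] by (rule inj_on_subset) auto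
  then show "card (elem_syzygy k0 ` (C - {k0})) = card C - 1"
    using fin k0 by (simp add: card_image)
qed

lemma independent_syzygies_card_le:
  assumes "finite C" "0 \<notin> C" "C \<noteq> {}" "S \<subseteq> syzygies C" "lin.independent S"
  shows "finite S" "card S \<le> card C - 1"
proof -
  obtain k0 where k0: "k0 \<in> C" using assms(3) by blast
  with assms(2) have "0 < k0" by (cases k0) auto
  note basis = elem_syzygies_basis[OF assms(1) k0 this]
  have "S \<subseteq> lin.span (elem_syzygy k0 ` (C - {k0}))" using assms(4) basis(2) by blast
  then show "finite S" "card S \<le> card C - 1"
    using lin.independent_span_bound[OF finite_imageI[OF finite_Diff[OF assms(1)]] assms(5)] basis(4)
    by metis+
qed

definition rel_vec :: "(nat \<Rightarrow> nat) \<times> (nat \<Rightarrow> nat) \<Rightarrow> nat \<Rightarrow> real" where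
  "rel_vec \<sigma> = (\<lambda>k. real (fst \<sigma> k) - real (snd \<sigma> k))"

lemma rel_vec_in_syzygies:
  assumes "finite A" "C \<subseteq> A" "supported_on (fst \<sigma>) C" "supported_on (snd \<sigma>) C"
    and "factor_eval A (fst \<sigma>) = factor_eval A (snd \<sigma>)"
  shows "rel_vec \<sigma> \<in> syzygies C"
proof -
  have "(\<Sum>j\<in>C. rel_vec \<sigma> j * real j)
      = real (\<Sum>j\<in>C. fst \<sigma> j * j) - real (\<Sum>j\<in>C. snd \<sigma> j * j)"
    by (simp add: rel_vec_def sum_subtractf left_diff_distrib)
  also have "\<dots> = 0" using assms factor_eval_supported[OF assms(1,2)] by simp
  finally show ?thesis
    using assms(3,4) by (simp add: syzygies_def rel_vec_def supported_on_def)
qed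

lemma cong_gen_integer_combination:
  assumes "(x, y) \<in> cong_gen A \<rho>" "finite \<rho>"
  shows "\<exists>c::_ \<Rightarrow> int. \<forall>k. real (x k) - real (y k) = (\<Sum>\<sigma>\<in>\<rho>. of_int (c \<sigma>) * rel_vec \<sigma> k)"
  using assms
proof (induction rule: cong_gen.induct)
  case (base a b)
  then show ?case
    by (intro exI[of _ "\<lambda>\<sigma>. if \<sigma> = (a, b) then 1 else 0"])
      (simp add: if_distrib[of "of_int"] if_distrib[of "\<lambda>x. x * _"] sum.delta' rel_vec_def
        cong: if_cong)
next
  case (refl a)
  then show ?case by (intro exI[of _ "\<lambda>_. 0"]) simp
next
  case (sym a b)
  then obtain c where "\<forall>k. real (a k) - real (b k) = (\<Sum>\<sigma>\<in>\<rho>. of_int (c \<sigma>) * rel_vec \<sigma> k)"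
    by blast
  then show ?case
    by (intro exI[of _ "\<lambda>\<sigma>. - c \<sigma>"] allI) (simp add: sum_negf, metis minus_diff_eq)
next
  case (trans a b d)
  then obtain c1 c2
    where "\<forall>k. real (a k) - real (b k) = (\<Sum>\<sigma>\<in>\<rho>. of_int (c1 \<sigma>) * rel_vec \<sigma> k)"
      and "\<forall>k. real (b k) - real (d k) = (\<Sum>\<sigma>\<in>\<rho>. of_int (c2 \<sigma>) * rel_vec \<sigma> k)"
    by blast
  then show ?case
    by (intro exI[of _ "\<lambda>\<sigma>. c1 \<sigma> + c2 \<sigma>"]) (simp add: sum.distrib distrib_right, smt (verit))
qed simp

section \<open>Presentations with one relation fewer than generators\<close>

lemma presentation_integer_combination:
  assumes pres: "is_presentation A \<rho>" and "finite \<rho>" "finite A"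
    and v0: "\<And>k. k \<notin> A \<Longrightarrow> v k = 0" and vs: "(\<Sum>k\<in>A. v k * int k) = 0"
  shows "\<exists>c::_ \<Rightarrow> int. \<forall>k. of_int (v k) = (\<Sum>\<sigma>\<in>\<rho>. of_int (c \<sigma>) * rel_vec \<sigma> k)"
proof -
  define x where "x = (\<lambda>k. nat (v k))"
  define y where "y = (\<lambda>k. nat (- v k))"
  have xy: "int (x k) - int (y k) = v k" for k by (simp add: x_def y_def)
  have "int (factor_eval A x) - int (factor_eval A y) = (\<Sum>k\<in>A. (int (x k) - int (y k)) * int k)"
    by (simp add: factor_eval_def sum_subtractf left_diff_distrib)
  also have "\<dots> = 0" using vs xy by simp
  finally have "factor_eval A x = factor_eval A y" by simp
  then have "(x, y) \<in> cong_gen A \<rho>"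
    using pres v0 by (auto simp: is_presentation_def kernel_congruence_def factorizations_def x_def y_def)
  then obtain c where "\<forall>k. real (x k) - real (y k) = (\<Sum>\<sigma>\<in>\<rho>. of_int (c \<sigma>) * rel_vec \<sigma> k)"
    using cong_gen_integer_combination \<open>finite \<rho>\<close> by blast
  moreover have "of_int (v k) = real (x k) - real (y k)" for k
    using xy by (metis of_int_diff of_int_of_nat_eq)
  ultimately show ?thesis by auto
qed

locale short_presentation =
  fixes A :: "nat set" and \<rho> :: "((nat \<Rightarrow> nat) \<times> (nat \<Rightarrow> nat)) set"
  assumes finite_gens: "finite A"
    and gens_pos: "0 \<notin> A"
    and presentation: "is_presentation A \<rho>"
    and finite_rels: "finite \<rho>"
    and card_rels: "card \<rho> + 1 = card A"
begin

lemma rels_kernel: "\<sigma> \<in> \<rho> \<Longrightarrow> factor_eval A (fst \<sigma>) = factor_eval A (snd \<sigma>)"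
  using presentation by (auto simp: is_presentation_def kernel_congruence_def)

lemma gens_nonempty: "A \<noteq> {}"
  using card_rels by auto

text \<open>The relation vectors span the syzygies of \<open>A\<close>, which contain \<open>card A - 1 = card \<rho>\<close>
  independent vectors.\<close>
lemma independent_rel_vecs: "lin.independent (rel_vec ` \<rho>)" "inj_on rel_vec \<rho>"
proof -
  obtain k0 where k0: "k0 \<in> A" using gens_nonempty by blast
  with gens_pos have k0_pos: "0 < k0" by (cases k0) auto
  define W where "W = elem_syzygy k0 ` (A - {k0})"
  note basis = elem_syzygies_basis[OF finite_gens k0 k0_pos, folded W_def]
  have W_span: "W \<subseteq> lin.span (rel_vec ` \<rho>)"
  proof
    fix w assume "w \<in> W"
    then obtain k where k: "k \<in> A" and w: "w = elem_syzygy k0 k" by (auto simp: W_def)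
    define v where "v j = (if j = k then int k0 else 0) - (if j = k0 then int k else 0)" for j
    have "(\<Sum>j\<in>A. v j * int j) = 0"
      using k k0 finite_gens
      by (simp add: v_def left_diff_distrib sum_subtractf if_distrib[of "\<lambda>x. x * _"] cong: if_cong)
    moreover have "v j = 0" if "j \<notin> A" for j using that k k0 by (auto simp: v_def)
    ultimately obtain c where c: "\<forall>j. of_int (v j) = (\<Sum>\<sigma>\<in>\<rho>. of_int (c \<sigma>) * rel_vec \<sigma> j)"
      using presentation_integer_combination[OF presentation finite_rels finite_gens, of v] by blast
    have "w j = of_int (v j)" for j by (simp add: w elem_syzygy_def v_def)
    with c have "w = (\<Sum>\<sigma>\<in>\<rho>. (\<lambda>j. of_int (c \<sigma>) * rel_vec \<sigma> j))"
      by (simp add: fun_eq_iff sum_fun_apply)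
    also have "\<dots> \<in> lin.span (rel_vec ` \<rho>)"
      by (intro lin.span_sum lin.span_scale lin.span_base) auto
    finally show "w \<in> lin.span (rel_vec ` \<rho>)" .
  qed
  obtain M where M: "M \<subseteq> rel_vec ` \<rho>" "lin.independent M" "rel_vec ` \<rho> \<subseteq> lin.span M"
    using lin.maximal_independent_subset[of "rel_vec ` \<rho>"] by blast
  have "W \<subseteq> lin.span M"
    using W_span lin.span_mono[OF M(3)] by (simp add: lin.span_span)
  moreover have fin_M: "finite M" using M(1) finite_rels finite_surj by blast
  ultimately have "card W \<le> card M" using lin.independent_span_bound[OF fin_M basis(3)] by auto
  moreover have "card M \<le> card (rel_vec ` \<rho>)" using M(1) finite_rels by (simp add: card_mono)
  moreover have "card (rel_vec ` \<rho>) \<le> card \<rho>" using finite_rels card_image_le by blast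
  ultimately have "card M = card (rel_vec ` \<rho>)" "card (rel_vec ` \<rho>) = card \<rho>"
    using basis(4) card_rels by auto
  then show "lin.independent (rel_vec ` \<rho>)" "inj_on rel_vec \<rho>"
    using M(1,2) card_subset_eq[OF _ M(1)] finite_rels by (auto simp: eq_card_imp_inj_on)
qed

lemma rel_vec_combination_eq_0:
  assumes "\<And>k. (\<Sum>\<sigma>\<in>\<rho>. d \<sigma> * rel_vec \<sigma> k) = 0" "\<sigma> \<in> \<rho>"
  shows "d \<sigma> = 0"
proof -
  define d' where "d' x = d (inv_into \<rho> rel_vec x)" for x
  have "(\<Sum>x\<in>rel_vec ` \<rho>. (\<lambda>j. d' x * x j)) = (\<Sum>\<sigma>\<in>\<rho>. (\<lambda>j. d \<sigma> * rel_vec \<sigma> j))"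
    using independent_rel_vecs(2) by (simp add: sum.reindex d'_def)
  also have "\<dots> = 0" using assms(1) by (simp add: fun_eq_iff sum_fun_apply)
  finally have "d' (rel_vec \<sigma>) = 0"
    by (rule lin.independentD[OF independent_rel_vecs(1) finite_imageI[OF finite_rels] order_refl])
      (use assms(2) in auto)
  then show ?thesis using independent_rel_vecs(2) assms(2) by (simp add: d'_def)
qed

lemma block_spans_syzygies:
  assumes C: "C \<subseteq> A" "C \<noteq> {}"
    and RB: "RB \<subseteq> \<rho>" "card RB + 1 = card C"
      "\<And>\<sigma>. \<sigma> \<in> RB \<Longrightarrow> supported_on (fst \<sigma>) C \<and> supported_on (snd \<sigma>) C"
  shows "syzygies C \<subseteq> lin.span (rel_vec ` RB)"
proof
  fix u assume u: "u \<in> syzygies C"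
  show "u \<in> lin.span (rel_vec ` RB)"
  proof (rule ccontr)
    assume u_notin: "u \<notin> lin.span (rel_vec ` RB)"
    have "rel_vec ` RB \<subseteq> syzygies C"
      using rel_vec_in_syzygies[OF finite_gens C(1)] RB rels_kernel by blast
    then have sub: "insert u (rel_vec ` RB) \<subseteq> syzygies C" using u by blast
    have "lin.independent (rel_vec ` RB)"
      using lin.independent_mono[OF independent_rel_vecs(1)] RB(1) by blast
    then have "lin.independent (insert u (rel_vec ` RB))"
      using u_notin lin.independent_insertI by blast
    then have "card (insert u (rel_vec ` RB)) \<le> card C - 1"
      using independent_syzygies_card_le[OF _ _ C(2) sub] C(1) finite_gens gens_pos finite_subset
      by blast
    moreover have "u \<notin> rel_vec ` RB" using u_notin lin.span_base by blast
    moreover have "card (rel_vec ` RB) = card RB"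
      using inj_on_subset[OF independent_rel_vecs(2) RB(1)] by (simp add: card_image)
    moreover have "finite RB" using RB(1) finite_rels finite_subset by blast
    ultimately show False using RB(2) by simp
  qed
qed

lemma block_integer_combination:
  assumes C: "C \<subseteq> A" "C \<noteq> {}"
    and RB: "RB \<subseteq> \<rho>" "card RB + 1 = card C"
      "\<And>\<sigma>. \<sigma> \<in> RB \<Longrightarrow> supported_on (fst \<sigma>) C \<and> supported_on (snd \<sigma>) C"
    and v0: "\<And>k. k \<notin> C \<Longrightarrow> v k = 0" and vs: "(\<Sum>k\<in>C. v k * int k) = 0"
  shows "\<exists>c::_ \<Rightarrow> int. \<forall>k. of_int (v k) = (\<Sum>\<sigma>\<in>RB. of_int (c \<sigma>) * rel_vec \<sigma> k)"
proof -
  have "(\<Sum>k\<in>A. v k * int k) = (\<Sum>k\<in>C. v k * int k)"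
    using v0 C finite_gens by (intro sum.mono_neutral_right) auto
  moreover have "v k = 0" if "k \<notin> A" for k using that v0 C(1) by blast
  ultimately obtain c where c: "\<forall>k. of_int (v k) = (\<Sum>\<sigma>\<in>\<rho>. of_int (c \<sigma>) * rel_vec \<sigma> k)"
    using presentation_integer_combination[OF presentation finite_rels finite_gens, of v] vs
    by auto
  have "(\<Sum>k\<in>C. of_int (v k) * real k) = (of_int (\<Sum>k\<in>C. v k * int k) :: real)" by simp
  then have "(\<lambda>k. of_int (v k)) \<in> syzygies C" using v0 vs by (simp add: syzygies_def)
  moreover have "finite (rel_vec ` RB)" using RB(1) finite_rels finite_subset by blast
  ultimately obtain u where u: "(\<lambda>k. of_int (v k)) = (\<Sum>x\<in>rel_vec ` RB. (\<lambda>j. u x * x j))"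
    using block_spans_syzygies[OF C RB] lin.span_finite[of "rel_vec ` RB"] by auto
  have injRB: "inj_on rel_vec RB" using inj_on_subset[OF independent_rel_vecs(2) RB(1)] .
  define d where "d \<sigma> = of_int (c \<sigma>) - (if \<sigma> \<in> RB then u (rel_vec \<sigma>) else 0)" for \<sigma>
  have "(\<Sum>\<sigma>\<in>\<rho>. d \<sigma> * rel_vec \<sigma> k) = 0" for k
  proof -
    have "(\<Sum>\<sigma>\<in>\<rho>. (if \<sigma> \<in> RB then u (rel_vec \<sigma>) else 0) * rel_vec \<sigma> k)
        = (\<Sum>\<sigma>\<in>RB. u (rel_vec \<sigma>) * rel_vec \<sigma> k)"
      using RB(1) finite_rels by (intro sum.mono_neutral_cong_right) auto
    also have "\<dots> = of_int (v k)"
      using fun_cong[OF u, of k] injRB by (simp add: sum_fun_apply sum.reindex)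
    finally show ?thesis
      using c by (simp add: d_def left_diff_distrib sum_subtractf)
  qed
  then have "c \<sigma> = 0" if "\<sigma> \<in> \<rho> - RB" for \<sigma>
    using rel_vec_combination_eq_0[of d \<sigma>] that by (simp add: d_def)
  then have "(\<Sum>\<sigma>\<in>\<rho>. of_int (c \<sigma>) * rel_vec \<sigma> k) = (\<Sum>\<sigma>\<in>RB. of_int (c \<sigma>) * rel_vec \<sigma> k)" for k
    using RB(1) finite_rels by (intro sum.mono_neutral_right) auto
  then show ?thesis using c by auto
qed

end

lemma Gcd_integer_combination:
  assumes "finite C"
  shows "\<exists>q::nat \<Rightarrow> int. (\<forall>k. k \<notin> C \<longrightarrow> q k = 0) \<and> (\<Sum>k\<in>C. q k * int k) = int (Gcd C)"
  using assms
proof (induction rule: finite_induct)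
  case empty
  then show ?case by (intro exI[of _ "\<lambda>_. 0"]) simp
next
  case (insert x F)
  then obtain q where q: "\<forall>k. k \<notin> F \<longrightarrow> q k = 0" "(\<Sum>k\<in>F. q k * int k) = int (Gcd F)"
    by blast
  obtain u v where uv: "u * int x + v * int (Gcd F) = gcd (int x) (int (Gcd F))"
    using bezout_int by blast
  define q' where "q' k = (if k = x then u else 0) + v * q k" for k
  have "(\<Sum>k\<in>insert x F. q' k * int k) = q' x * int x + (\<Sum>k\<in>F. q' k * int k)"
    using insert by simp
  also have "(\<Sum>k\<in>F. q' k * int k) = v * (\<Sum>k\<in>F. q k * int k)"
    unfolding q'_def using insert by (auto simp: sum_distrib_left intro!: sum.cong)
  also have "q' x = u" using q insert by (simp add: q'_def)
  finally have "(\<Sum>k\<in>insert x F. q' k * int k) = int (Gcd (insert x F))"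
    using uv q by simp
  moreover have "\<forall>k. k \<notin> insert x F \<longrightarrow> q' k = 0" using q by (simp add: q'_def)
  ultimately show ?case by blast
qed

lemma Gcd_dvd_integer_combination:
  assumes "finite C" "Gcd C dvd l"
  obtains p :: "nat \<Rightarrow> int" where "\<And>k. k \<notin> C \<Longrightarrow> p k = 0" "(\<Sum>k\<in>C. p k * int k) = int l"
proof -
  obtain m where m: "l = Gcd C * m" using assms(2) by blast
  obtain q where q: "\<forall>k. k \<notin> C \<longrightarrow> q k = 0" "(\<Sum>k\<in>C. q k * int k) = int (Gcd C)"
    using Gcd_integer_combination[OF assms(1)] by blast
  have "(\<Sum>k\<in>C. int m * q k * int k) = int l"
    using q(2) m by (simp add: mult.assoc sum_distrib_left[symmetric])
  with q(1) show ?thesis using that[of "\<lambda>k. int m * q k"] by simp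
qed

lemma lcm_Gcd_integer_syzygy:
  assumes fin: "finite X" "finite Y" and disj: "X \<inter> Y = {}"
  obtains v :: "nat \<Rightarrow> int" where "\<And>k. k \<notin> X \<union> Y \<Longrightarrow> v k = 0"
    "(\<Sum>k\<in>X \<union> Y. v k * int k) = 0" "(\<Sum>k\<in>X. v k * int k) = int (lcm (Gcd X) (Gcd Y))"
proof -
  let ?l = "lcm (Gcd X) (Gcd Y)"
  obtain p1 where p1: "\<And>k. k \<notin> X \<Longrightarrow> p1 k = 0" "(\<Sum>k\<in>X. p1 k * int k) = int ?l"
    using Gcd_dvd_integer_combination[OF fin(1)] by blast
  obtain p2 where p2: "\<And>k. k \<notin> Y \<Longrightarrow> p2 k = 0" "(\<Sum>k\<in>Y. p2 k * int k) = int ?l"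
    using Gcd_dvd_integer_combination[OF fin(2)] by blast
  define v where "v k = p1 k - p2 k" for k
  have v0: "v k = 0" if "k \<notin> X \<union> Y" for k using that p1 p2 by (simp add: v_def)
  have "(\<Sum>k\<in>X \<union> Y. p1 k * int k) = (\<Sum>k\<in>X. p1 k * int k)"
    "(\<Sum>k\<in>X \<union> Y. p2 k * int k) = (\<Sum>k\<in>Y. p2 k * int k)"
    using p1(1) p2(1) fin by (auto intro: sum.mono_neutral_right)
  then have "(\<Sum>k\<in>X \<union> Y. v k * int k) = 0"
    using p1(2) p2(2) by (simp add: v_def left_diff_distrib sum_subtractf)
  moreover have "(\<Sum>k\<in>X. v k * int k) = (\<Sum>k\<in>X. p1 k * int k)"
    using p2(1) disj by (intro sum.cong) (auto simp: v_def)
  ultimately show ?thesis using v0 p1(2) by (intro that) simp_all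
qed

lemma rel_vec_weight_joining:
  assumes "finite A" "X \<subseteq> A" "X \<inter> Y = {}" "supported_on a X" "supported_on b Y"
  shows "(\<Sum>k\<in>X. rel_vec (a, b) k * real k) = real (factor_eval A a)"
proof -
  have "(\<Sum>k\<in>X. b k * k) = 0" using assms(3,5) by (auto simp: supported_on_def intro!: sum.neutral)
  then show ?thesis
    using factor_eval_supported[OF assms(1,2,4)]
    by (simp add: rel_vec_def sum_subtractf left_diff_distrib flip: of_nat_mult of_nat_sum)
qed

context short_presentation
begin

lemma rel_vec_weight_within_blocks:
  assumes "X \<subseteq> A" "X \<inter> Y = {}" "\<sigma> \<in> \<rho>"
    and "(supported_on (fst \<sigma>) X \<and> supported_on (snd \<sigma>) X) \<or>
      (supported_on (fst \<sigma>) Y \<and> supported_on (snd \<sigma>) Y)"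
  shows "(\<Sum>k\<in>X. rel_vec \<sigma> k * real k) = 0"
  using assms(4)
proof
  assume "supported_on (fst \<sigma>) X \<and> supported_on (snd \<sigma>) X"
  then have "rel_vec \<sigma> \<in> syzygies X"
    using rel_vec_in_syzygies[OF finite_gens assms(1)] rels_kernel[OF assms(3)] by blast
  then show ?thesis by (simp add: syzygies_def)
next
  assume "supported_on (fst \<sigma>) Y \<and> supported_on (snd \<sigma>) Y"
  then have "rel_vec \<sigma> k = 0" if "k \<in> X" for k
    using that assms(2) disjoint_iff by (fastforce simp: rel_vec_def supported_on_def)
  then show ?thesis by simp
qed

text \<open>The relations of the block express an integer vector that evaluates to \<open>lcm (Gcd X) (Gcd Y)\<close>
  on \<open>X\<close> and to \<open>0\<close> on \<open>X \<union> Y\<close>. Evaluated on \<open>X\<close>, every relation of the block except \<open>(a, b)\<close>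
  contributes zero, so the lcm is an integer multiple of the weight of \<open>(a, b)\<close>.\<close>
lemma joining_relation_dvd_lcm:
  assumes XY: "X \<subseteq> A" "Y \<subseteq> A" "X \<inter> Y = {}" "X \<noteq> {}"
    and RB: "RB \<subseteq> \<rho>" "card RB + 1 = card (X \<union> Y)" "(a, b) \<in> RB"
    and ab: "supported_on a X" "supported_on b Y"
    and others: "\<And>\<sigma>. \<sigma> \<in> RB - {(a, b)} \<Longrightarrow>
      (supported_on (fst \<sigma>) X \<and> supported_on (snd \<sigma>) X) \<or> (supported_on (fst \<sigma>) Y \<and> supported_on (snd \<sigma>) Y)"
  shows "factor_eval A a dvd lcm (Gcd X) (Gcd Y)"
proof -
  define T where "T \<sigma> = (\<Sum>k\<in>X. rel_vec \<sigma> k * real k)" for \<sigma>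
  have fin: "finite X" "finite Y" "finite RB" using XY RB(1) finite_gens finite_rels finite_subset by blast+
  obtain v where v: "\<And>k. k \<notin> X \<union> Y \<Longrightarrow> v k = 0" "(\<Sum>k\<in>X \<union> Y. v k * int k) = 0"
    "(\<Sum>k\<in>X. v k * int k) = int (lcm (Gcd X) (Gcd Y))"
    using lcm_Gcd_integer_syzygy[OF fin(1,2) XY(3)] by blast
  have "\<And>\<sigma>. \<sigma> \<in> RB \<Longrightarrow> supported_on (fst \<sigma>) (X \<union> Y) \<and> supported_on (snd \<sigma>) (X \<union> Y)"
    using others ab RB(3) by (metis Diff_iff Un_upper1 Un_upper2 fst_conv snd_conv singletonD
        supported_on_mono)
  then obtain c where c: "\<forall>k. of_int (v k) = (\<Sum>\<sigma>\<in>RB. of_int (c \<sigma>) * rel_vec \<sigma> k)"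
    using block_integer_combination[of "X \<union> Y" RB v] XY RB(1,2) v by blast
  have "real (lcm (Gcd X) (Gcd Y)) = of_int (\<Sum>k\<in>X. v k * int k)" using v(3) by simp
  also have "\<dots> = (\<Sum>k\<in>X. \<Sum>\<sigma>\<in>RB. of_int (c \<sigma>) * rel_vec \<sigma> k * real k)"
    using c by (simp add: sum_distrib_right)
  also have "\<dots> = (\<Sum>\<sigma>\<in>RB. of_int (c \<sigma>) * T \<sigma>)"
    unfolding T_def by (subst sum.swap) (simp add: sum_distrib_left mult.assoc)
  also have "\<dots> = (\<Sum>\<sigma>\<in>{(a, b)}. of_int (c \<sigma>) * T \<sigma>)"
    using fin(3) RB(1,3) rel_vec_weight_within_blocks[OF XY(1,3) _ others]
    by (intro sum.mono_neutral_right) (auto simp: T_def)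
  also have "\<dots> = of_int (c (a, b)) * real (factor_eval A a)"
    using rel_vec_weight_joining[OF finite_gens XY(1,3) ab] by (simp add: T_def)
  finally have "of_int (int (lcm (Gcd X) (Gcd Y))) = (of_int (c (a, b) * int (factor_eval A a)) :: real)"
    by simp
  then have "int (factor_eval A a) dvd int (lcm (Gcd X) (Gcd Y))" by (simp only: of_int_eq_iff) simp
  then show ?thesis by simp
qed

end

section \<open>The doubling bound\<close>

lemma double_member_le_sum:
  fixes C :: "nat set"
  assumes fin: "finite C" and notin: "(\<Sum>k\<in>C. c k * k) \<notin> C" and pos: "0 < (\<Sum>k\<in>C. c k * k)"
  shows "\<exists>k\<in>C. 2 * k \<le> (\<Sum>k\<in>C. c k * k)"
proof -
  let ?n = "\<Sum>k\<in>C. c k * k"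
  have "\<not> (\<forall>k\<in>C. c k * k = 0)"
  proof
    assume "\<forall>k\<in>C. c k * k = 0"
    then have "?n = 0" by (rule sum.neutral)
    with pos show False by simp
  qed
  then obtain k where k: "k \<in> C" "c k * k \<noteq> 0" by blast
  show ?thesis
  proof (cases "2 \<le> c k")
    case True
    then have "2 * k \<le> c k * k" by simp
    also have "\<dots> \<le> ?n" using fin k(1) by (intro member_le_sum) auto
    finally show ?thesis using k(1) by blast
  next
    case False
    from k(2) have "c k \<noteq> 0" by auto
    with False have "c k = 1" by linarith
    then have split: "?n = k + (\<Sum>j\<in>C - {k}. c j * j)"
      using sum.remove[OF fin k(1), of "\<lambda>k. c k * k"] by simp
    moreover have "?n \<noteq> k" using notin k(1) by blast
    ultimately have "(\<Sum>j\<in>C - {k}. c j * j) \<noteq> 0" by linarith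
    then obtain j where j: "j \<in> C - {k}" "c j * j \<noteq> 0"
      using sum.neutral[of "C - {k}" "\<lambda>j. c j * j"] by force
    have "j \<le> c j * j" using j by simp
    also have "\<dots> \<le> (\<Sum>j\<in>C - {k}. c j * j)" using fin j(1) by (intro member_le_sum) auto
    finally have "k + j \<le> ?n" using split by linarith
    then have "2 * min k j \<le> ?n" by linarith
    then show ?thesis using k(1) j(1) by (metis DiffD1 min_def)
  qed
qed

lemma Gcd_Un_nat: "Gcd (X \<union> Y) = gcd (Gcd X) (Gcd (Y :: nat set))"
proof (rule dvd_antisym)
  show "Gcd (X \<union> Y) dvd gcd (Gcd X) (Gcd Y)"
    by (intro gcd_greatest Gcd_greatest) (auto intro: Gcd_dvd)
  show "gcd (Gcd X) (Gcd Y) dvd Gcd (X \<union> Y)"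
    by (rule Gcd_greatest) (metis Gcd_dvd Un_iff dvd_trans gcd_dvd1 gcd_dvd2)
qed

definition doubling_bound :: "nat set \<Rightarrow> bool" where
  "doubling_bound B \<longleftrightarrow> (\<forall>x\<in>B. Gcd B * 2 ^ (card B - 1) \<le> x)"

lemma Gcd_pos_nat: "x \<in> X \<Longrightarrow> 0 < x \<Longrightarrow> 0 < Gcd (X :: nat set)"
  by (metis Gcd_dvd dvd_0_left_iff gr0I less_irrefl)

lemma doubling_bound_Un_right:
  fixes X Y :: "nat set"
  assumes fin: "finite X" "finite Y" and disj: "X \<inter> Y = {}" and pos: "0 \<notin> X \<union> Y"
    and bounds: "doubling_bound X" "doubling_bound Y"
    and x: "x \<in> X" "2 * x \<le> n" and n: "n dvd lcm (Gcd X) (Gcd Y)" and y: "y \<in> Y"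
  shows "Gcd (X \<union> Y) * 2 ^ (card (X \<union> Y) - 1) \<le> y"
proof -
  let ?g = "gcd (Gcd X) (Gcd Y)"
  have "0 < x" "0 < y" using x(1) y pos by (auto intro: gr0I)
  then have gX: "0 < Gcd X" and gY: "0 < Gcd Y" using Gcd_pos_nat x(1) y by blast+
  have "card X > 0" "card Y > 0" using fin x(1) y card_gt_0_iff by blast+
  then have "Gcd X * 2 ^ card X = 2 * (Gcd X * 2 ^ (card X - 1))"
    by (cases "card X") simp_all
  also have "\<dots> \<le> 2 * x" using bounds(1) x(1) by (simp add: doubling_bound_def)
  also have "\<dots> \<le> n" by (rule x(2))
  also have "n \<le> lcm (Gcd X) (Gcd Y)" using n gX gY by (simp add: dvd_imp_le lcm_pos_nat)
  finally have "?g * (Gcd X * 2 ^ card X) \<le> ?g * lcm (Gcd X) (Gcd Y)" by (rule mult_le_mono2)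
  also have "\<dots> = Gcd X * Gcd Y" by (rule prod_gcd_lcm_nat[symmetric])
  finally have "Gcd X * (?g * 2 ^ card X) \<le> Gcd X * Gcd Y" by (simp add: mult.left_commute)
  then have key: "?g * 2 ^ card X \<le> Gcd Y" using gX by simp
  have "card (X \<union> Y) - 1 = card X + (card Y - 1)"
    using fin disj \<open>card Y > 0\<close> by (simp add: card_Un_disjoint)
  then have "Gcd (X \<union> Y) * 2 ^ (card (X \<union> Y) - 1) = ?g * 2 ^ card X * 2 ^ (card Y - 1)"
    by (simp add: Gcd_Un_nat power_add mult.assoc)
  also have "\<dots> \<le> Gcd Y * 2 ^ (card Y - 1)" using key by simp
  also have "\<dots> \<le> y" using bounds(2) y by (simp add: doubling_bound_def)
  finally show ?thesis .
qed

lemma doubling_bound_Un: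
  fixes X Y :: "nat set"
  assumes "finite X" "finite Y" "X \<inter> Y = {}" "0 \<notin> X \<union> Y"
    and "doubling_bound X" "doubling_bound Y"
    and "x \<in> X" "2 * x \<le> n" "y \<in> Y" "2 * y \<le> n" and "n dvd lcm (Gcd X) (Gcd Y)"
  shows "doubling_bound (X \<union> Y)"
  unfolding doubling_bound_def
proof
  fix z assume "z \<in> X \<union> Y"
  then show "Gcd (X \<union> Y) * 2 ^ (card (X \<union> Y) - 1) \<le> z"
  proof
    assume "z \<in> X"
    then show ?thesis
      using doubling_bound_Un_right[of Y X y n z] assms by (simp add: Un_commute Int_commute lcm.commute)
  next
    assume "z \<in> Y"
    then show ?thesis using doubling_bound_Un_right[of X Y x n z] assms by simp
  qed
qed

locale short_presentation_irreducible = short_presentation +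
  assumes irreducible: "x \<in> A \<Longrightarrow> x \<notin> monoid_gen (A - {x})"
begin

lemma combination_of_disjoint_gens_notin:
  assumes "B \<subseteq> A" "C \<subseteq> A" "B \<inter> C = {}"
  shows "(\<Sum>k\<in>C. c k * k) \<notin> B"
proof
  assume n: "(\<Sum>k\<in>C. c k * k) \<in> B"
  then have "C \<subseteq> A - {\<Sum>k\<in>C. c k * k}" using assms by auto
  moreover have "finite C" using assms(2) finite_gens finite_subset by blast
  ultimately have "(\<Sum>k\<in>C. c k * k) \<in> monoid_gen (A - {\<Sum>k\<in>C. c k * k})"
    by (intro monoid_gen_sum)
  with n assms(1) irreducible show False by blast
qed

lemma doubling_bound_join:
  assumes XY: "X \<subseteq> A" "Y \<subseteq> A" "X \<inter> Y = {}" "X \<noteq> {}"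
    and RB: "RB \<subseteq> \<rho>" "card RB + 1 = card (X \<union> Y)" "(a, b) \<in> RB"
    and ab: "supported_on a X" "supported_on b Y" "a \<noteq> 0"
    and others: "\<And>\<sigma>. \<sigma> \<in> RB - {(a, b)} \<Longrightarrow>
      (supported_on (fst \<sigma>) X \<and> supported_on (snd \<sigma>) X) \<or> (supported_on (fst \<sigma>) Y \<and> supported_on (snd \<sigma>) Y)"
    and bounds: "doubling_bound X" "doubling_bound Y"
  shows "doubling_bound (X \<union> Y)"
proof -
  define n where "n = factor_eval A a"
  have fin: "finite X" "finite Y" using XY finite_gens finite_subset by blast+
  have nX: "n = (\<Sum>k\<in>X. a k * k)"
    unfolding n_def using factor_eval_supported[OF finite_gens XY(1) ab(1)] .
  have nY: "n = (\<Sum>k\<in>Y. b k * k)"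
    using factor_eval_supported[OF finite_gens XY(2) ab(2)] rels_kernel[of "(a, b)"] RB
    by (auto simp: n_def)
  obtain k where k: "a k \<noteq> 0" using ab(3) by (auto simp: fun_eq_iff)
  with ab(1) have "k \<in> X" by (rule supported_on_nonzero_member)
  with k XY(1) gens_pos have "0 < a k * k" by (auto intro: gr0I)
  also have "a k * k \<le> n" unfolding nX using fin(1) \<open>k \<in> X\<close> by (intro member_le_sum) auto
  finally have "0 < n" .
  have "n \<notin> X" unfolding nY by (rule combination_of_disjoint_gens_notin[OF XY(1,2,3)])
  have "n \<notin> Y" unfolding nX by (rule combination_of_disjoint_gens_notin[OF XY(2,1)]) (use XY(3) in blast)
  have "\<exists>x\<in>X. 2 * x \<le> n"
    using \<open>n \<notin> X\<close> \<open>0 < n\<close> unfolding nX by (rule double_member_le_sum[OF fin(1)])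
  then obtain x where x: "x \<in> X" "2 * x \<le> n" ..
  have "\<exists>y\<in>Y. 2 * y \<le> n"
    using \<open>n \<notin> Y\<close> \<open>0 < n\<close> unfolding nY by (rule double_member_le_sum[OF fin(2)])
  then obtain y where y: "y \<in> Y" "2 * y \<le> n" ..
  have "n dvd lcm (Gcd X) (Gcd Y)"
    unfolding n_def using joining_relation_dvd_lcm[OF XY RB ab(1,2) others] .
  then show ?thesis
    using doubling_bound_Un[OF fin XY(3) _ bounds x y] XY(1,2) gens_pos by blast
qed

end

section \<open>Merging blocks\<close>

text \<open>A state of the merging process: \<open>P\<close> partitions the generators into blocks and \<open>R B\<close> is
  the set of relations assigned to the block \<open>B\<close>.\<close>
definition block_decomposition :: "nat set \<Rightarrow> ((nat \<Rightarrow> nat) \<times> (nat \<Rightarrow> nat)) set \<Rightarrow> nat set set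
    \<Rightarrow> (nat set \<Rightarrow> ((nat \<Rightarrow> nat) \<times> (nat \<Rightarrow> nat)) set) \<Rightarrow> bool" where
  "block_decomposition A \<rho> P R \<longleftrightarrow> finite P \<and> (\<forall>B\<in>P. B \<noteq> {} \<and> B \<subseteq> A) \<and> \<Union>P = A \<and>
    (\<forall>B\<in>P. \<forall>B'\<in>P. B \<noteq> B' \<longrightarrow> B \<inter> B' = {}) \<and>
    (\<forall>B\<in>P. R B \<subseteq> \<rho> \<and> card (R B) + 1 = card B \<and>
       (\<forall>\<sigma>\<in>R B. supported_on (fst \<sigma>) B \<and> supported_on (snd \<sigma>) B) \<and> doubling_bound B) \<and>
    (\<forall>B\<in>P. \<forall>B'\<in>P. B \<noteq> B' \<longrightarrow> R B \<inter> R B' = {})"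

lemma block_decompositionD:
  assumes "block_decomposition A \<rho> P R"
  shows "finite P" "\<Union>P = A"
    and "\<And>B. B \<in> P \<Longrightarrow> B \<noteq> {}" "\<And>B. B \<in> P \<Longrightarrow> B \<subseteq> A"
    and "\<And>B B'. B \<in> P \<Longrightarrow> B' \<in> P \<Longrightarrow> B \<noteq> B' \<Longrightarrow> B \<inter> B' = {}"
    and "\<And>B. B \<in> P \<Longrightarrow> R B \<subseteq> \<rho>" "\<And>B. B \<in> P \<Longrightarrow> card (R B) + 1 = card B"
    and "\<And>B \<sigma>. B \<in> P \<Longrightarrow> \<sigma> \<in> R B \<Longrightarrow> supported_on (fst \<sigma>) B \<and> supported_on (snd \<sigma>) B"
    and "\<And>B. B \<in> P \<Longrightarrow> doubling_bound B"
    and "\<And>B B'. B \<in> P \<Longrightarrow> B' \<in> P \<Longrightarrow> B \<noteq> B' \<Longrightarrow> R B \<inter> R B' = {}"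
  using assms unfolding block_decomposition_def by auto

lemma block_decomposition_singletons:
  "finite A \<Longrightarrow> block_decomposition A \<rho> ((\<lambda>a. {a}) ` A) (\<lambda>_. {})"
  unfolding block_decomposition_def doubling_bound_def by auto

lemma card_merge_less:
  assumes "finite P" "X \<in> P" "Y \<in> P" "X \<noteq> Y"
  shows "card (insert Z (P - {X, Y})) < card P"
proof -
  have "card (insert Z (P - {X, Y})) \<le> Suc (card (P - {X, Y}))"
    using assms(1) by (simp add: card_insert_le_m1 card_insert_if)
  also have "card (P - {X, Y}) = card P - 2" using assms by (simp add: card_Diff_subset)
  finally show ?thesis using assms card_mono[of P "{X, Y}"] by auto
qed

context short_presentation
begin

lemma card_unassigned_rels:
  assumes D: "block_decomposition A \<rho> P R"
  shows "card (\<rho> - \<Union>(R ` P)) + 1 = card P"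
proof -
  note P = block_decompositionD[OF D]
  have fin_B: "finite B" if "B \<in> P" for B using P(4)[OF that] finite_gens finite_subset by blast
  have fin_R: "finite (R B)" if "B \<in> P" for B using P(6)[OF that] finite_rels finite_subset by blast
  have "card A = (\<Sum>B\<in>P. card B)"
    unfolding P(2)[symmetric] using P(5) fin_B
    by (intro card_Union_disjoint) (auto simp: pairwise_def disjnt_def)
  also have "\<dots> = (\<Sum>B\<in>P. card (R B) + 1)" using P(7) by (intro sum.cong) auto
  also have "\<dots> = (\<Sum>B\<in>P. card (R B)) + card P" by (simp only: sum.distrib) simp
  also have "(\<Sum>B\<in>P. card (R B)) = card (\<Union>(R ` P))"
    using card_UN_disjoint[OF P(1), of R] fin_R P(10) by simp
  finally have "card A = card (\<Union>(R ` P)) + card P" .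
  moreover have "\<Union>(R ` P) \<subseteq> \<rho>" using P(6) by blast
  moreover have "card (\<rho> - \<Union>(R ` P)) = card \<rho> - card (\<Union>(R ` P))"
    using calculation(2) finite_rels by (intro card_Diff_subset) (auto intro: finite_subset)
  moreover have "card (\<Union>(R ` P)) \<le> card \<rho>" using calculation(2) finite_rels by (rule card_mono[rotated])
  ultimately show ?thesis using card_rels by linarith
qed

definition anchored_in :: "nat set \<Rightarrow> (nat \<Rightarrow> nat) \<times> (nat \<Rightarrow> nat) \<Rightarrow> bool" where
  "anchored_in B \<sigma> \<longleftrightarrow> (supported_on (fst \<sigma>) B \<and> fst \<sigma> \<noteq> 0) \<or> (supported_on (snd \<sigma>) B \<and> snd \<sigma> \<noteq> 0)"

lemma anchored_in_disjoint_blocks: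
  assumes "B1 \<inter> B2 = {}" "anchored_in B1 \<sigma>" "anchored_in B2 \<sigma>"
  shows "(supported_on (fst \<sigma>) B1 \<and> fst \<sigma> \<noteq> 0 \<and> supported_on (snd \<sigma>) B2) \<or>
    (supported_on (fst \<sigma>) B2 \<and> fst \<sigma> \<noteq> 0 \<and> supported_on (snd \<sigma>) B1)"
  using assms supported_on_disjoint_eq_0[of _ B1 B2] unfolding anchored_in_def by blast

lemma unassigned_rel_leaving_block:
  assumes D: "block_decomposition A \<rho> P R" and B: "B \<in> P" "B' \<in> P" "B' \<noteq> B"
  shows "\<exists>\<sigma>\<in>\<rho> - \<Union>(R ` P). anchored_in B \<sigma>"
proof -
  note P = block_decompositionD[OF D]
  obtain l0 where l0: "l0 \<in> B" using P(3)[OF B(1)] by blast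
  obtain k0 where k0: "k0 \<in> B'" using P(3)[OF B(2)] by blast
  have "k0 \<in> A" using k0 P(4)[OF B(2)] by blast
  moreover have "k0 \<notin> B" using k0 P(5)[OF B(2,1,3)] by blast
  ultimately obtain a b where ab: "(a, b) \<in> \<rho> \<or> (b, a) \<in> \<rho>" "supported_on a B"
    "\<not> supported_on b B" "a \<noteq> 0"
    by (rule presentation_leaving_relation[OF finite_gens gens_pos presentation P(4)[OF B(1)] l0])
  have unassigned: "\<sigma> \<notin> \<Union>(R ` P)" if \<sigma>: "\<sigma> = (a, b) \<or> \<sigma> = (b, a)" for \<sigma>
  proof
    assume "\<sigma> \<in> \<Union>(R ` P)"
    then obtain B'' where B'': "B'' \<in> P" "\<sigma> \<in> R B''" by blast
    from P(8)[OF B''] \<sigma> have "supported_on a B''" "supported_on b B''" by auto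
    with ab(2,4) P(5)[OF B''(1) B(1)] supported_on_disjoint_eq_0 have "B'' = B" by blast
    with \<open>supported_on b B''\<close> ab(3) show False by simp
  qed
  from ab(1) show ?thesis
  proof
    assume "(a, b) \<in> \<rho>"
    then show ?thesis using unassigned[of "(a, b)"] ab(2,4)
      by (intro bexI[of _ "(a, b)"]) (auto simp: anchored_in_def)
  next
    assume "(b, a) \<in> \<rho>"
    then show ?thesis using unassigned[of "(b, a)"] ab(2,4)
      by (intro bexI[of _ "(b, a)"]) (auto simp: anchored_in_def)
  qed
qed

text \<open>Pigeonhole: there are fewer unassigned relations than blocks.\<close>
lemma unassigned_rel_joining_blocks:
  assumes D: "block_decomposition A \<rho> P R" and "2 \<le> card P"
  obtains \<sigma> X Y where "\<sigma> \<in> \<rho> - \<Union>(R ` P)" "X \<in> P" "Y \<in> P" "X \<noteq> Y"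
    "supported_on (fst \<sigma>) X" "fst \<sigma> \<noteq> 0" "supported_on (snd \<sigma>) Y"
proof -
  note P = block_decompositionD[OF D]
  let ?U = "\<rho> - \<Union>(R ` P)"
  define f where "f B = (SOME \<sigma>. \<sigma> \<in> ?U \<and> anchored_in B \<sigma>)" for B
  have f: "f B \<in> ?U \<and> anchored_in B (f B)" if "B \<in> P" for B
  proof -
    have "\<not> P \<subseteq> {B}" using \<open>2 \<le> card P\<close> card_mono[OF finite.intros(2)[OF finite.emptyI], of P B] by auto
    then obtain B' where "B' \<in> P" "B' \<noteq> B" by blast
    then have "\<exists>\<sigma>. \<sigma> \<in> ?U \<and> anchored_in B \<sigma>" using unassigned_rel_leaving_block[OF D that] by blast
    then show ?thesis unfolding f_def by (rule someI_ex)
  qed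
  have "\<not> inj_on f P"
  proof
    assume "inj_on f P"
    moreover have "f ` P \<subseteq> ?U" using f by blast
    ultimately have "card P \<le> card ?U" using finite_rels by (intro card_inj_on_le) auto
    then show False using card_unassigned_rels[OF D] by simp
  qed
  then obtain B1 B2 where B12: "B1 \<in> P" "B2 \<in> P" "B1 \<noteq> B2" "f B1 = f B2"
    unfolding inj_on_def by blast
  then have "anchored_in B1 (f B1)" "anchored_in B2 (f B1)" using f by metis+
  with P(5)[OF B12(1-3)] consider
    "supported_on (fst (f B1)) B1" "fst (f B1) \<noteq> 0" "supported_on (snd (f B1)) B2" |
    "supported_on (fst (f B1)) B2" "fst (f B1) \<noteq> 0" "supported_on (snd (f B1)) B1"
    using anchored_in_disjoint_blocks by blast
  then show ?thesis using that f[OF B12(1)] B12(1-3) by cases blast+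
qed

end

definition merged_rels :: "(nat set \<Rightarrow> ((nat \<Rightarrow> nat) \<times> (nat \<Rightarrow> nat)) set) \<Rightarrow> nat set \<Rightarrow> nat set
    \<Rightarrow> (nat \<Rightarrow> nat) \<times> (nat \<Rightarrow> nat) \<Rightarrow> nat set \<Rightarrow> ((nat \<Rightarrow> nat) \<times> (nat \<Rightarrow> nat)) set" where
  "merged_rels R X Y \<sigma> Z = (if Z = X \<union> Y then R X \<union> R Y \<union> {\<sigma>} else R Z)"

lemma merged_blocks_disjoint:
  assumes D: "block_decomposition A \<rho> P R" and \<sigma>: "\<sigma> \<notin> \<Union>(R ` P)" and XY: "X \<in> P" "Y \<in> P"
    and B: "B \<in> insert (X \<union> Y) (P - {X, Y})" "B' \<in> insert (X \<union> Y) (P - {X, Y})" "B \<noteq> B'"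
  shows "B \<inter> B' = {} \<and> merged_rels R X Y \<sigma> B \<inter> merged_rels R X Y \<sigma> B' = {}"
proof -
  note P = block_decompositionD[OF D]
  have other: "Z \<noteq> X \<union> Y" "Z \<inter> (X \<union> Y) = {}" "(R X \<union> R Y \<union> {\<sigma>}) \<inter> R Z = {}"
    if "Z \<in> P - {X, Y}" for Z
  proof -
    have "Z \<inter> X = {}" "Z \<inter> Y = {}" using P(5) that XY by auto
    then show "Z \<inter> (X \<union> Y) = {}" by blast
    then show "Z \<noteq> X \<union> Y" using P(3)[OF XY(1)] by blast
    have "R Z \<inter> R X = {}" "R Z \<inter> R Y = {}" using P(10) that XY by auto
    then show "(R X \<union> R Y \<union> {\<sigma>}) \<inter> R Z = {}" using \<sigma> that by blast
  qed
  consider "B = X \<union> Y" "B' \<in> P - {X, Y}" | "B \<in> P - {X, Y}" "B' = X \<union> Y"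
    | "B \<in> P - {X, Y}" "B' \<in> P - {X, Y}"
    using B by blast
  then show ?thesis
  proof cases
    case 1
    then have "merged_rels R X Y \<sigma> B = R X \<union> R Y \<union> {\<sigma>}" "merged_rels R X Y \<sigma> B' = R B'"
      using other(1)[OF 1(2)] by (simp_all add: merged_rels_def)
    then show ?thesis using other(2,3)[OF 1(2)] 1(1) by blast
  next
    case 2
    then have "merged_rels R X Y \<sigma> B = R B" "merged_rels R X Y \<sigma> B' = R X \<union> R Y \<union> {\<sigma>}"
      using other(1)[OF 2(1)] by (simp_all add: merged_rels_def)
    then show ?thesis using other(2,3)[OF 2(1)] 2(2) by blast
  next
    case 3
    then have "merged_rels R X Y \<sigma> B = R B" "merged_rels R X Y \<sigma> B' = R B'"
      using other(1)[OF 3(1)] other(1)[OF 3(2)] by (simp_all add: merged_rels_def)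
    moreover have "B \<inter> B' = {}" "R B \<inter> R B' = {}" using 3 P(5,10) B(3) by blast+
    ultimately show ?thesis by simp
  qed
qed

context short_presentation_irreducible
begin

lemma merged_block:
  assumes D: "block_decomposition A \<rho> P R"
    and \<sigma>: "\<sigma> \<in> \<rho> - \<Union>(R ` P)" and XY: "X \<in> P" "Y \<in> P" "X \<noteq> Y"
    and supp: "supported_on (fst \<sigma>) X" "fst \<sigma> \<noteq> 0" "supported_on (snd \<sigma>) Y"
  shows "R X \<union> R Y \<union> {\<sigma>} \<subseteq> \<rho>" "card (R X \<union> R Y \<union> {\<sigma>}) + 1 = card (X \<union> Y)"
    and "\<forall>\<tau>\<in>R X \<union> R Y \<union> {\<sigma>}. supported_on (fst \<tau>) (X \<union> Y) \<and> supported_on (snd \<tau>) (X \<union> Y)"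
    and "doubling_bound (X \<union> Y)"
proof -
  note P = block_decompositionD[OF D]
  let ?RB = "R X \<union> R Y \<union> {\<sigma>}"
  have disj: "X \<inter> Y = {}" using P(5)[OF XY] .
  show "?RB \<subseteq> \<rho>" using P(6) XY \<sigma> by blast
  have fin: "finite X" "finite Y" "finite (R X)" "finite (R Y)"
    using P(4,6) XY finite_gens finite_rels finite_subset by meson+
  have "\<sigma> \<notin> R X" "\<sigma> \<notin> R Y" using \<sigma> XY by blast+
  then have "card ?RB = card (R X) + card (R Y) + 1"
    using fin P(10)[OF XY] by (simp add: card_Un_disjoint)
  then show "card ?RB + 1 = card (X \<union> Y)"
    using P(7)[OF XY(1)] P(7)[OF XY(2)] fin disj by (simp add: card_Un_disjoint)
  have others: "(supported_on (fst \<tau>) X \<and> supported_on (snd \<tau>) X) \<or>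
      (supported_on (fst \<tau>) Y \<and> supported_on (snd \<tau>) Y)" if \<tau>: "\<tau> \<in> ?RB - {(fst \<sigma>, snd \<sigma>)}" for \<tau>
  proof -
    have "\<tau> \<in> R X \<or> \<tau> \<in> R Y" using \<tau> by auto
    then show ?thesis using P(8)[OF XY(1)] P(8)[OF XY(2)] by blast
  qed
  show "\<forall>\<tau>\<in>?RB. supported_on (fst \<tau>) (X \<union> Y) \<and> supported_on (snd \<tau>) (X \<union> Y)"
  proof
    fix \<tau> assume \<tau>: "\<tau> \<in> ?RB"
    have mono: "supported_on x (X \<union> Y)" if "supported_on x X \<or> supported_on x Y" for x
      using that supported_on_mono[of x X "X \<union> Y"] supported_on_mono[of x Y "X \<union> Y"] by blast
    show "supported_on (fst \<tau>) (X \<union> Y) \<and> supported_on (snd \<tau>) (X \<union> Y)"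
    proof (cases "\<tau> = \<sigma>")
      case True
      then show ?thesis using supp mono by blast
    next
      case False
      then show ?thesis using others[of \<tau>] \<tau> mono by auto
    qed
  qed
  show "doubling_bound (X \<union> Y)"
    using doubling_bound_join[OF P(4)[OF XY(1)] P(4)[OF XY(2)] disj P(3)[OF XY(1)] \<open>?RB \<subseteq> \<rho>\<close>
        \<open>card ?RB + 1 = card (X \<union> Y)\<close> _ supp(1,3,2) others P(9)[OF XY(1)] P(9)[OF XY(2)]]
    by simp
qed


lemma block_decomposition_merge:
  assumes D: "block_decomposition A \<rho> P R"
    and \<sigma>: "\<sigma> \<in> \<rho> - \<Union>(R ` P)" and XY: "X \<in> P" "Y \<in> P" "X \<noteq> Y"
    and supp: "supported_on (fst \<sigma>) X" "fst \<sigma> \<noteq> 0" "supported_on (snd \<sigma>) Y"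
  shows "block_decomposition A \<rho> (insert (X \<union> Y) (P - {X, Y})) (merged_rels R X Y \<sigma>)"
    (is "block_decomposition A \<rho> ?P ?R")
proof -
  note P = block_decompositionD[OF D]
  have rels: "?R B \<subseteq> \<rho> \<and> card (?R B) + 1 = card B \<and>
      (\<forall>\<tau>\<in>?R B. supported_on (fst \<tau>) B \<and> supported_on (snd \<tau>) B) \<and> doubling_bound B"
    if "B \<in> ?P" for B
  proof (cases "B = X \<union> Y")
    case True
    then show ?thesis using merged_block[OF assms] by (simp add: merged_rels_def)
  next
    case False
    with that have "B \<in> P" by blast
    with False show ?thesis using P(6-9) by (simp add: merged_rels_def)
  qed
  have disjoint: "B \<inter> B' = {} \<and> ?R B \<inter> ?R B' = {}" if "B \<in> ?P" "B' \<in> ?P" "B \<noteq> B'" for B B'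
    using merged_blocks_disjoint[OF D _ XY(1,2) that] \<sigma> by blast
  show ?thesis
    unfolding block_decomposition_def
  proof (intro conjI)
    show "finite ?P" using P(1) by simp
    show "\<Union>?P = A" using P(2) XY by blast
    show "\<forall>B\<in>?P. B \<noteq> {} \<and> B \<subseteq> A" using P(3,4) XY by blast
    show "\<forall>B\<in>?P. \<forall>B'\<in>?P. B \<noteq> B' \<longrightarrow> B \<inter> B' = {}" using disjoint by blast
    show "\<forall>B\<in>?P. \<forall>B'\<in>?P. B \<noteq> B' \<longrightarrow> ?R B \<inter> ?R B' = {}" using disjoint by blast
    show "\<forall>B\<in>?P. ?R B \<subseteq> \<rho> \<and> card (?R B) + 1 = card B \<and>
      (\<forall>\<tau>\<in>?R B. supported_on (fst \<tau>) B \<and> supported_on (snd \<tau>) B) \<and> doubling_bound B"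
      using rels by blast
  qed
qed

lemma doubling_bound_gens:
  assumes "block_decomposition A \<rho> P R"
  shows "doubling_bound A"
  using assms
proof (induction "card P" arbitrary: P R rule: less_induct)
  case less
  note P = block_decompositionD[OF less.prems]
  show ?case
  proof (cases "2 \<le> card P")
    case True
    then obtain \<sigma> X Y where join: "\<sigma> \<in> \<rho> - \<Union>(R ` P)" "X \<in> P" "Y \<in> P" "X \<noteq> Y"
      "supported_on (fst \<sigma>) X" "fst \<sigma> \<noteq> 0" "supported_on (snd \<sigma>) Y"
      by (rule unassigned_rel_joining_blocks[OF less.prems])
    show ?thesis
      by (rule less.hyps[OF card_merge_less[OF P(1) join(2-4)] block_decomposition_merge[OF less.prems join]])
  next
    case False
    have "P \<noteq> {}" using P(2) gens_nonempty by auto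
    with P(1) have "0 < card P" by (simp add: card_gt_0_iff)
    with False have "card P = 1" by linarith
    then obtain B where "P = {B}" by (rule card_1_singletonE)
    then show ?thesis using P(2) P(9) by simp
  qed
qed

lemma pow2_card_le_Min: "2 ^ (card A - 1) \<le> Min A"
proof -
  have bound: "doubling_bound A"
    by (rule doubling_bound_gens[OF block_decomposition_singletons[OF finite_gens, of \<rho>]])
  have "Min A \<in> A" using finite_gens gens_nonempty by simp
  moreover from this have "0 < Min A" using gens_pos by (auto intro: gr0I)
  ultimately have "1 \<le> Gcd A" using Gcd_pos_nat by (simp add: Suc_le_eq)
  then have "2 ^ (card A - 1) \<le> Gcd A * 2 ^ (card A - 1)" by simp
  also have "\<dots> \<le> Min A" using bound \<open>Min A \<in> A\<close> by (simp add: doubling_bound_def)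
  finally show ?thesis .
qed

end

lemma multiplicity_le_conductor:
  assumes S: "numerical_semigroup S" "S \<noteq> UNIV"
    and m: "m \<in> S" "0 < m" "\<And>x. x \<in> S \<Longrightarrow> 0 < x \<Longrightarrow> m \<le> x"
  shows "m \<le> conductor S"
proof -
  have closed: "0 \<in> S" "\<And>x y. x \<in> S \<Longrightarrow> y \<in> S \<Longrightarrow> x + y \<in> S" "finite (UNIV - S)"
    using S(1) by (auto simp: numerical_semigroup_def)
  have "m \<noteq> 1"
  proof
    assume "m = 1"
    have "n \<in> S" for n
    proof (induction n)
      case (Suc n)
      with closed(2) m(1) \<open>m = 1\<close> show ?case by (metis Suc_eq_plus1)
    qed (rule closed(1))
    then show False using S(2) by auto
  qed
  then have "m - 1 \<notin> S" using m by force
  then have "m - 1 \<le> frobenius S" unfolding frobenius_def using closed(3) by (intro Max_ge) auto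
  then show ?thesis by (simp add: conductor_def)
qed

lemma Min_gens_le_conductor:
  assumes "numerical_semigroup S" "S \<noteq> UNIV" "monoid_gen A = S" "finite A" "A \<noteq> {}" "0 \<notin> A"
  shows "Min A \<le> conductor S"
proof (rule multiplicity_le_conductor[OF assms(1,2)])
  have "Min A \<in> A" using assms(4,5) by simp
  then show "0 < Min A" "Min A \<in> S" using assms(3,6) monoid_gen_generator by (auto intro: gr0I)
  show "Min A \<le> x" if "x \<in> S" "0 < x" for x
    using monoid_gen_Min_le[of x A] that assms(3,4) by simp
qed

lemma numerical_semigroup_gens_nonempty:
  assumes "numerical_semigroup (monoid_gen A)"
  shows "A \<noteq> {}"
proof
  assume "A = {}"
  then have "monoid_gen A = {0}" by (auto simp: monoid_gen_def)
  with assms show False by (simp add: numerical_semigroup_def)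
qed

lemma le_log2_plus_one:
  assumes "0 < n" "2 ^ (n - 1) \<le> c"
  shows "real n \<le> log 2 (real c) + 1"
proof -
  have "0 < c" using assms(2) by (metis less_le_trans zero_less_numeral zero_less_power)
  have "real (n - 1) = log 2 (2 ^ (n - 1))" by simp
  also have "\<dots> \<le> log 2 (real c)"
    using assms(2) \<open>0 < c\<close> by (subst log_le_cancel_iff) (auto simp del: log_pow_cancel simp flip: of_nat_le_iff)
  finally show ?thesis using assms(1) by simp
qed

theorem corollary2p7:
  fixes S A :: "nat set"
  assumes "numerical_semigroup S"
    and "S \<noteq> UNIV"
    and "is_min_gen_sys S A"
    and "complete_intersection S A"
  shows "real (card A) \<le> log 2 (real (conductor S)) + 1"
proof (cases "finite A")
  case False
  \<comment> \<open>then \<open>card A = 0\<close>\<close>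
  then show ?thesis by (simp add: conductor_def)
next
  case True
  have gens: "monoid_gen A = S" using assms(3) by (simp add: is_min_gen_sys_def)
  obtain \<rho> where \<rho>: "finite \<rho>" "is_minimal_presentation A \<rho>" "card \<rho> = card A - 1"
    using assms(4) unfolding complete_intersection_def by blast
  have "A \<noteq> {}" using assms(1) gens numerical_semigroup_gens_nonempty by blast
  interpret short_presentation_irreducible A \<rho>
    using True \<rho> \<open>A \<noteq> {}\<close> min_gen_sys_zero_notin[OF assms(3)] min_gen_sys_irreducible[OF assms(3)]
    by unfold_locales (auto simp: is_minimal_presentation_def card_gt_0_iff)
  have "2 ^ (card A - 1) \<le> conductor S"
    using pow2_card_le_Min Min_gens_le_conductor[OF assms(1,2) gens True gens_nonempty gens_pos]
    by (rule order_trans)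
  then show ?thesis using True gens_nonempty by (intro le_log2_plus_one) (simp_all add: card_gt_0_iff)
qed

end
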